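(* Let $p_1,\dots,p_n$ be probability densities on $\mathbb{R}^d$ of the form $p_i=e^{-f_i}$ with $f_i$ smooth, let $w_1,\dots,w_n>0$ with $\sum_iw_i=1$, and let $p=\sum_{i=1}^nw_ip_i$. Suppose each $p_i$ satisfies a Poincaré inequality with constant $C$. Then $\lambda_{n+1}(p)\ge 1/C$.
   Context: For a probability density $p$ on $\mathbb{R}^d$, $\mathcal E_p(g)=\int\|\nabla g\|^2p\,dx$ is the Dirichlet form of Langevin diffusion with stationary distribution $p$, $\langle g,h\rangle_p=\int ghp\,dx$, $\|g\|_p^2=\langle g,g\rangle_p$, $\operatorname{Var}_p(g)=\|g-\int gp\|_p^2$; functions $g$ range over locally Lipschitz functions with $\int(g^2+\|\nabla g\|^2)p<\infty$. $p$ satisfies a Poincaré inequality with constant $C$ if $\mathcal E_p(g)\ge\frac1C\operatorname{Var}_p(g)$ for all such $g$. The $k$-th eigenvalue of (minus) the Langevin generator is defined variationally: $\lambda_k(p)=\sup_{S\subseteq L^2(p),\ \dim S=k-1}\ \inf\{\mathcal E_p(g)/\|g\|_p^2:\ g\neq0,\ \langle g,s\rangle_p=0\ \forall s\in S\}$. *)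

theory Defs
  imports "HOL-Analysis.Analysis"
begin

text \<open>Setting: R^d is modelled by an arbitrary euclidean_space 'a, with Lebesgue measure.\<close>

fun pderivs :: "'a::euclidean_space list \<Rightarrow> ('a \<Rightarrow> real) \<Rightarrow> ('a \<Rightarrow> real)" where
  "pderivs [] f = f"
| "pderivs (b # bs) f = (\<lambda>x. frechet_derivative (pderivs bs f) (at x) b)"

definition smooth_fun :: "('a::euclidean_space \<Rightarrow> real) \<Rightarrow> bool" where
  "smooth_fun f \<longleftrightarrow> (\<forall>bs. set bs \<subseteq> Basis \<longrightarrow> (\<forall>x. pderivs bs f differentiable (at x)))"

definition prob_density :: "('a::euclidean_space \<Rightarrow> real) \<Rightarrow> bool" where
  "prob_density p \<longleftrightarrow> (\<forall>x. 0 \<le> p x) \<and> p \<in> borel_measurable lebesgue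
     \<and> integrable lebesgue p \<and> (\<integral>x. p x \<partial>lebesgue) = 1"

definition locally_lipschitz :: "('a::euclidean_space \<Rightarrow> real) \<Rightarrow> bool" where
  "locally_lipschitz g \<longleftrightarrow> (\<forall>x. \<exists>e>0. \<exists>L. L-lipschitz_on (ball x e) g)"

text \<open>Gradient (exists a.e. for locally Lipschitz functions, by Rademacher).\<close>
definition grad :: "('a::euclidean_space \<Rightarrow> real) \<Rightarrow> 'a \<Rightarrow> 'a" where
  "grad g x = (if g differentiable (at x)
      then (\<Sum>b\<in>Basis. frechet_derivative g (at x) b *\<^sub>R b) else 0)"

definition dirichlet :: "('a::euclidean_space \<Rightarrow> real) \<Rightarrow> ('a \<Rightarrow> real) \<Rightarrow> real" where
  "dirichlet p g = (\<integral>x. (norm (grad g x))\<^sup>2 * p x \<partial>lebesgue)"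

definition inner_p :: "('a::euclidean_space \<Rightarrow> real) \<Rightarrow> ('a \<Rightarrow> real) \<Rightarrow> ('a \<Rightarrow> real) \<Rightarrow> real" where
  "inner_p p g h = (\<integral>x. g x * h x * p x \<partial>lebesgue)"

definition normsq_p :: "('a::euclidean_space \<Rightarrow> real) \<Rightarrow> ('a \<Rightarrow> real) \<Rightarrow> real" where
  "normsq_p p g = inner_p p g g"

definition var_p :: "('a::euclidean_space \<Rightarrow> real) \<Rightarrow> ('a \<Rightarrow> real) \<Rightarrow> real" where
  "var_p p g = normsq_p p (\<lambda>x. g x - (\<integral>y. g y * p y \<partial>lebesgue))"

definition L2_p :: "('a::euclidean_space \<Rightarrow> real) \<Rightarrow> ('a \<Rightarrow> real) set" where
  "L2_p p = {s. s \<in> borel_measurable lebesgue \<and> integrable lebesgue (\<lambda>x. (s x)\<^sup>2 * p x)}"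

definition admissible :: "('a::euclidean_space \<Rightarrow> real) \<Rightarrow> ('a \<Rightarrow> real) \<Rightarrow> bool" where
  "admissible p g \<longleftrightarrow> locally_lipschitz g
     \<and> integrable lebesgue (\<lambda>x. ((g x)\<^sup>2 + (norm (grad g x))\<^sup>2) * p x)"

definition poincare :: "('a::euclidean_space \<Rightarrow> real) \<Rightarrow> real \<Rightarrow> bool" where
  "poincare p C \<longleftrightarrow> (\<forall>g. admissible p g \<longrightarrow> dirichlet p g \<ge> (1 / C) * var_p p g)"

text \<open>A (k-1)-dimensional subspace S of L^2(p) is given by a basis s_0..s_{k-2},
  linearly independent as elements of L^2(p); orthogonality to S = orthogonality to the basis.\<close>
definition l2_indep :: "('a::euclidean_space \<Rightarrow> real) \<Rightarrow> nat \<Rightarrow> (nat \<Rightarrow> 'a \<Rightarrow> real) \<Rightarrow> bool" where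
  "l2_indep p m s \<longleftrightarrow> (\<forall>j<m. s j \<in> L2_p p) \<and>
     (\<forall>c::nat \<Rightarrow> real. normsq_p p (\<lambda>x. \<Sum>j<m. c j * s j x) = 0 \<longrightarrow> (\<forall>j<m. c j = 0))"

definition eigval :: "nat \<Rightarrow> ('a::euclidean_space \<Rightarrow> real) \<Rightarrow> ereal" where
  "eigval k p = (SUP s \<in> {s. l2_indep p (k - 1) s}.
      INF g \<in> {g. admissible p g \<and> normsq_p p g \<noteq> 0 \<and> (\<forall>j<k-1. inner_p p g (s j) = 0)}.
        ereal (dirichlet p g / normsq_p p g))"

end

theory Submission
  imports Defs
begin

text \<open>The ratios w_i p_i / p are bounded continuous functions, and a
  function g is orthogonal to w_i p_i / p in L^2(p) exactly when it has mean zero under p_i.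
  So in the variational definition of lambda_(n+1)(p) choose for S an n-dimensional space of
  bounded continuous functions containing all these ratios. A test function orthogonal to S is
  centred under every p_i, hence the Poincare inequality of p_i gives
  int |grad g|^2 p_i >= (1/C) int g^2 p_i, and averaging with the weights w_i gives
  E_p(g) >= (1/C) |g|_p^2.\<close>

lemma borel_measurable_lebesgue_continuous:
  fixes h :: "'a::euclidean_space \<Rightarrow> real"
  assumes "continuous_on UNIV h"
  shows "h \<in> borel_measurable lebesgue"
  by (simp add: assms borel_measurable_continuous_onI measurable_completion)

lemma integrable_abs_bound:
  fixes h F :: "'b \<Rightarrow> real"
  assumes "integrable M F" "h \<in> borel_measurable M" "\<And>x. \<bar>h x\<bar> \<le> F x"
  shows "integrable M h"
  using assms by (intro Bochner_Integration.integrable_bound[OF assms(1,2)] AE_I2)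
    (auto intro: order_trans[OF _ abs_ge_self])

lemma integrable_bounded_mult:
  fixes h p :: "'b \<Rightarrow> real"
  assumes "integrable M p" "h \<in> borel_measurable M" "\<And>x. \<bar>h x\<bar> \<le> B"
  shows "integrable M (\<lambda>x. h x * p x)"
proof (rule integrable_abs_bound)
  show "integrable M (\<lambda>x. B * \<bar>p x\<bar>)" using assms(1) by simp
  show "\<bar>h x * p x\<bar> \<le> B * \<bar>p x\<bar>" for x
    using assms(3)[of x] by (simp add: abs_mult mult_right_mono)
qed (use assms borel_measurable_integrable in auto)

lemma continuous_nonneg_integral_eq_0:
  fixes h :: "'a::euclidean_space \<Rightarrow> real"
  assumes "continuous_on UNIV h" "\<And>x. 0 \<le> h x" "integrable lebesgue h"
    and "(\<integral>x. h x \<partial>lebesgue) = 0"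
  shows "h x = 0"
proof -
  have "AE x in lebesgue. x \<in> {x. h x = 0}"
    using assms integral_nonneg_eq_0_iff_AE[of lebesgue h] by simp
  moreover have "closed {x. h x = 0}"
    using continuous_closed_preimage_constant[OF assms(1) closed_UNIV, of 0] by simp
  ultimately show ?thesis using mem_closed_if_AE_lebesgue by blast
qed

lemma locally_lipschitz_imp_continuous:
  fixes g :: "'a::euclidean_space \<Rightarrow> real"
  assumes "locally_lipschitz g"
  shows "continuous_on UNIV g"
proof (rule continuous_at_imp_continuous_on, intro ballI)
  fix x :: 'a
  obtain e L where "e > 0" "L-lipschitz_on (ball x e) g"
    using assms unfolding locally_lipschitz_def by blast
  then have "continuous_on (ball x e) g" by (metis lipschitz_on_continuous_on)
  then show "isCont g x"
    using \<open>e > 0\<close> continuous_on_eq_continuous_at[OF open_ball, of x e g] by simp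
qed

lemma smooth_fun_imp_continuous:
  assumes "smooth_fun f"
  shows "continuous_on UNIV f"
proof -
  have "f differentiable (at x)" for x
    using assms unfolding smooth_fun_def by (metis empty_subsetI list.set(1) pderivs.simps(1))
  then show ?thesis
    by (simp add: differentiable_at_imp_differentiable_on differentiable_imp_continuous_on)
qed

lemma inj_on_if_coefficients_zero:
  fixes e :: "nat \<Rightarrow> 'v::real_vector"
  assumes "\<And>c. (\<Sum>k<n. c k *\<^sub>R e k) = 0 \<Longrightarrow> \<forall>k<n. c k = 0"
  shows "inj_on e {..<n}"
proof (rule inj_onI, rule ccontr)
  fix i j assume ij: "i \<in> {..<n}" "j \<in> {..<n}" "e i = e j" "i \<noteq> j"
  define c :: "nat \<Rightarrow> real" where "c k = (if k = i then 1 else if k = j then -1 else 0)" for k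
  have "(\<Sum>k<n. c k *\<^sub>R e k) = e i - e j"
    using ij by (simp add: c_def if_distrib[of "\<lambda>a. a *\<^sub>R _"] sum.If_cases lessThan_def)
  then have "\<forall>k<n. c k = 0" using ij(3) by (intro assms) simp
  then show False using ij(1) by (auto simp: c_def)
qed

lemma independent_image_iff_coefficients_zero:
  fixes e :: "nat \<Rightarrow> 'v::real_vector"
  assumes inj: "inj_on e {..<n}"
  shows "independent (e ` {..<n}) \<longleftrightarrow> (\<forall>c. (\<Sum>k<n. c k *\<^sub>R e k) = 0 \<longrightarrow> (\<forall>k<n. c k = 0))"
proof -
  have reindex: "(\<Sum>v\<in>e ` {..<n}. u v *\<^sub>R v) = (\<Sum>k<n. u (e k) *\<^sub>R e k)" for u
    using inj by (simp add: sum.reindex)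
  show ?thesis
  proof
    assume indep: "independent (e ` {..<n})"
    show "\<forall>c. (\<Sum>k<n. c k *\<^sub>R e k) = 0 \<longrightarrow> (\<forall>k<n. c k = 0)"
    proof (intro allI impI)
      fix c :: "nat \<Rightarrow> real" and k assume sum0: "(\<Sum>k<n. c k *\<^sub>R e k) = 0" and k: "k < n"
      define u where "u v = c (the_inv_into {..<n} e v)" for v
      have u_e: "u (e i) = c i" if "i < n" for i
        using inj that by (simp add: u_def the_inv_into_f_f)
      have "(\<Sum>v\<in>e ` {..<n}. u v *\<^sub>R v) = (\<Sum>k<n. c k *\<^sub>R e k)"
        unfolding reindex by (rule sum.cong) (simp_all add: u_e)
      then have "(\<Sum>v\<in>e ` {..<n}. u v *\<^sub>R v) = 0" using sum0 by simp
      then have "u (e k) = 0" using independentD[OF indep] k by blast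
      then show "c k = 0" using u_e[OF k] by simp
    qed
  next
    assume coeff: "\<forall>c. (\<Sum>k<n. c k *\<^sub>R e k) = 0 \<longrightarrow> (\<forall>k<n. c k = 0)"
    show "independent (e ` {..<n})"
    proof (rule real_vector.independent_if_scalars_zero)
      fix u v assume "(\<Sum>v\<in>e ` {..<n}. u v *\<^sub>R v) = 0" "v \<in> e ` {..<n}"
      then show "u v = 0" using coeff[rule_format, of "\<lambda>k. u (e k)"] by (auto simp: reindex)
    qed simp
  qed
qed

lemma exists_independent_card_spanning:
  fixes Q E :: "'v::real_vector set"
  assumes "finite Q" "finite E" "independent E" "card E = n" "card Q \<le> n"
  obtains D where "finite D" "card D = n" "independent D" "Q \<subseteq> span D"
proof -
  obtain B where B: "B \<subseteq> Q" "independent B" "Q \<subseteq> span B"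
    by (rule maximal_independent_subset)
  obtain C where C: "B \<subseteq> C" "C \<subseteq> Q \<union> E" "independent C" "Q \<union> E \<subseteq> span C"
    using maximal_independent_subset_extend[of B "Q \<union> E"] B by blast
  have finB: "finite B" using B assms finite_subset by blast
  have finC: "finite C" using C assms by (meson finite_Un finite_subset)
  have "n \<le> card C" using independent_span_bound[OF finC assms(3)] C assms(4) by blast
  moreover have cardB: "card B \<le> n" using B assms card_mono order_trans by blast
  moreover have "card (C - B) = card C - card B" using C(1) finB by (rule card_Diff_subset[rotated])
  ultimately have "n - card B \<le> card (C - B)" by linarith
  then obtain X where X: "X \<subseteq> C - B" "card X = n - card B"
    using obtain_subset_with_card_n by metis
  have finX: "finite X" using X finC finite_subset by blast
  show ?thesis
  proof
    show "finite (B \<union> X)" using finX finB by simp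
    have "card (B \<union> X) = card B + card X" using X finX finB by (subst card_Un_disjoint) auto
    then show "card (B \<union> X) = n" using X cardB by simp
    show "independent (B \<union> X)"
      using C X independent_mono by (metis Diff_subset Un_subset_iff order_trans)
    show "Q \<subseteq> span (B \<union> X)" using B by (metis span_mono sup_ge1 order_trans)
  qed
qed

lemma polyfun_eq_0_on_infinite:
  fixes c :: "nat \<Rightarrow> real"
  assumes "infinite S" "\<And>z. z \<in> S \<Longrightarrow> (\<Sum>k<n. c k * z ^ k) = 0"
  shows "\<forall>k<n. c k = 0"
proof -
  define c' where "c' k = (if k < n then c k else 0)" for k
  have "(\<Sum>k\<le>n. c' k * z ^ k) = (\<Sum>k<n. c k * z ^ k)" for z
    by (simp add: c'_def flip: lessThan_Suc_atMost)
  then have "S \<subseteq> {z. (\<Sum>k\<le>n. c' k * z ^ k) = 0}" using assms(2) by auto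
  then have "infinite {z. (\<Sum>k\<le>n. c' k * z ^ k) = 0}" using assms(1) finite_subset by blast
  then have "\<forall>k\<le>n. c' k = 0" using polyfun_finite_roots[of c' n] by blast
  then show ?thesis by (metis c'_def less_imp_le_nat)
qed

lemma exists_inverse_one_plus_norm_eq:
  fixes z :: real
  assumes "0 < z" "z \<le> 1"
  shows "\<exists>x::'a::euclidean_space. 1 / (1 + norm x) = z"
proof -
  obtain b :: 'a where "b \<in> Basis" using nonempty_Basis by blast
  then have "norm b = 1" by simp
  moreover have "1 / z - 1 \<ge> 0" using assms by (simp add: field_simps)
  ultimately have "1 / (1 + norm ((1 / z - 1) *\<^sub>R b)) = 1 / (1 + (1 / z - 1))" by simp
  also have "\<dots> = z" using assms by simp
  finally show ?thesis by blast
qed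

lemma apply_bcontfun_sum:
  "apply_bcontfun (\<Sum>i\<in>S. F i) x = (\<Sum>i\<in>S. apply_bcontfun (F i) x)"
  by (induction S rule: infinite_finite_induct) auto

lemma bcontfun_exists_independent_card:
  "\<exists>E :: ('a::euclidean_space \<Rightarrow>\<^sub>C real) set. finite E \<and> independent E \<and> card E = n"
proof -
  define \<phi> :: "'a \<Rightarrow> real" where "\<phi> x = 1 / (1 + norm x)" for x
  have \<phi>_bounds: "0 < \<phi> x" "\<phi> x \<le> 1" for x
    unfolding \<phi>_def by (auto simp: add_pos_nonneg)
  define e where "e k = Bcontfun (\<lambda>x. \<phi> x ^ k)" for k
  have "(\<lambda>x. \<phi> x ^ k) \<in> bcontfun" for k
  proof (rule bcontfun_normI)
    show "continuous_on UNIV (\<lambda>x. \<phi> x ^ k)"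
      unfolding \<phi>_def by (intro continuous_intros) (smt (verit) norm_ge_zero)
    show "norm (\<phi> x ^ k) \<le> 1" for x
      using \<phi>_bounds[of x] by (simp add: power_le_one abs_of_pos)
  qed
  then have e_apply: "apply_bcontfun (e k) x = \<phi> x ^ k" for k x
    unfolding e_def by (simp add: Bcontfun_inverse)
  \<comment> \<open>a vanishing combination of the powers of \<open>\<phi>\<close> is a polynomial vanishing on \<open>{0<..1} = range \<phi>\<close>\<close>
  have coeff: "\<forall>k<n. c k = 0" if "(\<Sum>k<n. c k *\<^sub>R e k) = 0" for c
  proof (rule polyfun_eq_0_on_infinite)
    show "infinite {0<..(1::real)}" by simp
    fix z :: real assume "z \<in> {0<..1}"
    then obtain x :: 'a where x: "\<phi> x = z"
      unfolding \<phi>_def using exists_inverse_one_plus_norm_eq by fastforce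
    have "apply_bcontfun (\<Sum>k<n. c k *\<^sub>R e k) x = 0" using that by simp
    then show "(\<Sum>k<n. c k * z ^ k) = 0" by (simp add: x e_apply apply_bcontfun_sum)
  qed
  have "inj_on e {..<n}" using coeff by (rule inj_on_if_coefficients_zero)
  moreover have "independent (e ` {..<n})"
    using coeff by (simp add: independent_image_iff_coefficients_zero[OF calculation])
  ultimately show ?thesis by (intro exI[of _ "e ` {..<n}"]) (simp add: card_image)
qed

lemma ratio_in_bcontfun:
  fixes u v :: "'a::topological_space \<Rightarrow> real"
  assumes "continuous_on UNIV u" "continuous_on UNIV v"
    and "\<And>x. 0 \<le> u x" "\<And>x. u x \<le> v x" "\<And>x. 0 < v x"
  shows "(\<lambda>x. u x / v x) \<in> bcontfun"
proof (rule bcontfun_normI)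
  show "continuous_on UNIV (\<lambda>x. u x / v x)"
    using assms by (intro continuous_intros) (auto simp: less_imp_neq[symmetric])
  show "norm (u x / v x) \<le> 1" for x
    using assms(3-5)[of x] by simp
qed

lemma l2_indep_bcontfun:
  fixes p :: "'a::euclidean_space \<Rightarrow> real" and e :: "nat \<Rightarrow> ('a \<Rightarrow>\<^sub>C real)"
  assumes p_cont: "continuous_on UNIV p" and p_pos: "\<And>x. 0 < p x"
    and p_int: "integrable lebesgue p"
    and coeff: "\<And>c. (\<Sum>k<m. c k *\<^sub>R e k) = 0 \<Longrightarrow> \<forall>k<m. c k = 0"
  shows "l2_indep p m (\<lambda>k. apply_bcontfun (e k))"
proof -
  have sq_int: "integrable lebesgue (\<lambda>x. apply_bcontfun v x * apply_bcontfun v x * p x)"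
    for v :: "'a \<Rightarrow>\<^sub>C real"
  proof (rule integrable_bounded_mult[OF p_int])
    show "(\<lambda>x. apply_bcontfun v x * apply_bcontfun v x) \<in> borel_measurable lebesgue"
      by (intro borel_measurable_lebesgue_continuous continuous_intros continuous_on_apply_bcontfun)
    show "\<bar>apply_bcontfun v x * apply_bcontfun v x\<bar> \<le> (norm v)\<^sup>2" for x
    proof -
      have "\<bar>apply_bcontfun v x\<bar> \<le> norm v" using norm_bounded[of v x] by simp
      then have "\<bar>apply_bcontfun v x\<bar> * \<bar>apply_bcontfun v x\<bar> \<le> norm v * norm v"
        by (intro mult_mono) auto
      then show ?thesis by (metis abs_mult power2_eq_square)
    qed
  qed
  show ?thesis
    unfolding l2_indep_def
  proof (intro conjI allI impI)
    fix k show "apply_bcontfun (e k) \<in> L2_p p"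
      unfolding L2_p_def using sq_int[of "e k"]
      by (simp add: power2_eq_square borel_measurable_lebesgue_continuous)
  next
    fix c :: "nat \<Rightarrow> real" and k
    assume norm0: "normsq_p p (\<lambda>x. \<Sum>j<m. c j * apply_bcontfun (e j) x) = 0" and k: "k < m"
    define V where "V = (\<Sum>j<m. c j *\<^sub>R e j)"
    have "apply_bcontfun V x * apply_bcontfun V x * p x = 0" for x
    proof (rule continuous_nonneg_integral_eq_0
        [of "\<lambda>x. apply_bcontfun V x * apply_bcontfun V x * p x"])
      show "continuous_on UNIV (\<lambda>x. apply_bcontfun V x * apply_bcontfun V x * p x)"
        using p_cont by (intro continuous_intros continuous_on_apply_bcontfun)
      show "0 \<le> apply_bcontfun V x * apply_bcontfun V x * p x" for x
        using p_pos[of x] by simp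
      show "(\<integral>x. apply_bcontfun V x * apply_bcontfun V x * p x \<partial>lebesgue) = 0"
        using norm0 by (simp add: V_def normsq_p_def inner_p_def apply_bcontfun_sum)
    qed (rule sq_int)
    then have "apply_bcontfun V x = 0" for x using p_pos[of x] by (metis mult_eq_0_iff less_irrefl)
    then have "V = 0" by (intro bcontfun_eqI) simp
    then show "c k = 0" using coeff k by (simp add: V_def)
  qed
qed

lemma inner_p_bcontfun_span_eq_0:
  fixes g p :: "'a::euclidean_space \<Rightarrow> real"
  assumes gp_int: "integrable lebesgue (\<lambda>x. g x * p x)"
    and g_meas: "g \<in> borel_measurable lebesgue" and p_meas: "p \<in> borel_measurable lebesgue"
    and orth: "\<And>v. v \<in> D \<Longrightarrow> inner_p p g (apply_bcontfun v) = 0" and u: "u \<in> span D"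
  shows "inner_p p g (apply_bcontfun u) = 0"
proof -
  have int: "integrable lebesgue (\<lambda>x. g x * apply_bcontfun v x * p x)" for v
  proof (rule integrable_abs_bound)
    show "integrable lebesgue (\<lambda>x. norm v * \<bar>g x * p x\<bar>)" using gp_int by simp
    have "apply_bcontfun v \<in> borel_measurable lebesgue"
      by (intro borel_measurable_lebesgue_continuous continuous_on_apply_bcontfun)
    then show "(\<lambda>x. g x * apply_bcontfun v x * p x) \<in> borel_measurable lebesgue"
      using g_meas p_meas by (intro borel_measurable_times)
    show "\<bar>g x * apply_bcontfun v x * p x\<bar> \<le> norm v * \<bar>g x * p x\<bar>" for x
    proof -
      have "\<bar>apply_bcontfun v x\<bar> * \<bar>g x * p x\<bar> \<le> norm v * \<bar>g x * p x\<bar>"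
        using norm_bounded[of v x] by (intro mult_right_mono) auto
      then show ?thesis by (simp add: abs_mult mult_ac)
    qed
  qed
  have "linear (\<lambda>v. inner_p p g (apply_bcontfun v))"
  proof (rule linearI)
    show "inner_p p g (apply_bcontfun (v + w))
        = inner_p p g (apply_bcontfun v) + inner_p p g (apply_bcontfun w)" for v w
      unfolding inner_p_def using int[of v] int[of w] by (simp add: distrib_left distrib_right)
    show "inner_p p g (apply_bcontfun (c *\<^sub>R v)) = c *\<^sub>R inner_p p g (apply_bcontfun v)" for c v
    proof -
      have "(\<lambda>x. g x * apply_bcontfun (c *\<^sub>R v) x * p x)
          = (\<lambda>x. c * (g x * apply_bcontfun v x * p x))"
        by (simp add: fun_eq_iff mult_ac)
      then show ?thesis unfolding inner_p_def by simp
    qed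
  qed
  then show ?thesis using orth u by (rule linear_eq_0_on_span)
qed

lemma bcontfun_l2_indep_spanning:
  fixes p :: "'a::euclidean_space \<Rightarrow> real" and q :: "nat \<Rightarrow> ('a \<Rightarrow>\<^sub>C real)"
  assumes p_cont: "continuous_on UNIV p" and p_pos: "\<And>x. 0 < p x"
    and p_int: "integrable lebesgue p"
  obtains s where "l2_indep p n s"
    and "\<And>g i. integrable lebesgue (\<lambda>x. g x * p x) \<Longrightarrow> g \<in> borel_measurable lebesgue \<Longrightarrow>
           \<forall>j<n. inner_p p g (s j) = 0 \<Longrightarrow> i < n \<Longrightarrow> inner_p p g (apply_bcontfun (q i)) = 0"
proof -
  obtain E :: "('a \<Rightarrow>\<^sub>C real) set" where E: "finite E" "independent E" "card E = n"
    using bcontfun_exists_independent_card by blast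
  \<comment> \<open>the \<open>q i\<close> may be linearly dependent, so their span is padded to dimension exactly \<open>n\<close>\<close>
  obtain D where D: "finite D" "card D = n" "independent D" "q ` {..<n} \<subseteq> span D"
    using exists_independent_card_spanning[of "q ` {..<n}" E n] E card_image_le[of "{..<n}" q] by auto
  obtain e where e: "bij_betw e {..<n} D"
    using ex_bij_betw_nat_finite[OF D(1)] D(2) atLeast0LessThan by metis
  then have coeff: "\<forall>k<n. c k = 0" if "(\<Sum>k<n. c k *\<^sub>R e k) = 0" for c
    using D(3) that independent_image_iff_coefficients_zero[of e n]
    by (simp add: bij_betw_def)
  show ?thesis
  proof
    show "l2_indep p n (\<lambda>k. apply_bcontfun (e k))"
      using p_cont p_pos p_int coeff by (rule l2_indep_bcontfun)
  next
    fix g i assume gp_int: "integrable lebesgue (\<lambda>x. g x * p x)"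
      and g_meas: "g \<in> borel_measurable lebesgue"
      and orth: "\<forall>j<n. inner_p p g (apply_bcontfun (e j)) = 0" and i: "i < n"
    have "inner_p p g (apply_bcontfun v) = 0" if "v \<in> D" for v
      using e orth that by (auto simp: bij_betw_def)
    then show "inner_p p g (apply_bcontfun (q i)) = 0"
      using inner_p_bcontfun_span_eq_0[OF gp_int g_meas borel_measurable_lebesgue_continuous[OF p_cont]]
        D(4) i by blast
  qed
qed

lemma admissible_integrable:
  fixes p g :: "'a::euclidean_space \<Rightarrow> real"
  assumes adm: "admissible p g" and p_meas: "p \<in> borel_measurable lebesgue"
    and p_nonneg: "\<And>x. 0 \<le> p x"
  shows "g \<in> borel_measurable lebesgue"
    and "integrable lebesgue (\<lambda>x. g x * g x * p x)"
    and "integrable lebesgue (\<lambda>x. (norm (grad g x))\<^sup>2 * p x)"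
proof -
  have G_int: "integrable lebesgue (\<lambda>x. ((g x)\<^sup>2 + (norm (grad g x))\<^sup>2) * p x)"
    using adm unfolding admissible_def by blast
  show g_meas: "g \<in> borel_measurable lebesgue"
    using adm unfolding admissible_def
    by (intro borel_measurable_lebesgue_continuous locally_lipschitz_imp_continuous) blast
  show g2_int: "integrable lebesgue (\<lambda>x. g x * g x * p x)"
  proof (rule integrable_abs_bound[OF G_int])
    show "(\<lambda>x. g x * g x * p x) \<in> borel_measurable lebesgue"
      using g_meas p_meas by (intro borel_measurable_times)
    show "\<bar>g x * g x * p x\<bar> \<le> ((g x)\<^sup>2 + (norm (grad g x))\<^sup>2) * p x" for x
      using p_nonneg[of x] by (simp add: abs_mult distrib_right power2_eq_square)
  qed
  have "(\<lambda>x. (norm (grad g x))\<^sup>2 * p x)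
      = (\<lambda>x. ((g x)\<^sup>2 + (norm (grad g x))\<^sup>2) * p x - g x * g x * p x)"
    by (simp add: fun_eq_iff algebra_simps power2_eq_square)
  then show "integrable lebesgue (\<lambda>x. (norm (grad g x))\<^sup>2 * p x)"
    using G_int g2_int by simp
qed

lemma admissible_integrable_mult:
  fixes p g :: "'a::euclidean_space \<Rightarrow> real"
  assumes adm: "admissible p g" and p_int: "integrable lebesgue p"
    and p_nonneg: "\<And>x. 0 \<le> p x"
  shows "integrable lebesgue (\<lambda>x. g x * p x)"
proof (rule integrable_abs_bound)
  have p_meas: "p \<in> borel_measurable lebesgue" using p_int by (rule borel_measurable_integrable)
  note g = admissible_integrable[OF adm p_meas p_nonneg]
  show "integrable lebesgue (\<lambda>x. g x * g x * p x + p x)" using g(2) p_int by simp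
  show "(\<lambda>x. g x * p x) \<in> borel_measurable lebesgue" using g(1) p_meas by simp
  show "\<bar>g x * p x\<bar> \<le> g x * g x * p x + p x" for x
  proof -
    have "\<bar>g x\<bar> \<le> g x * g x + 1"
    proof (cases "\<bar>g x\<bar> \<le> 1")
      case False
      then have "\<bar>g x\<bar> * 1 \<le> \<bar>g x\<bar> * \<bar>g x\<bar>" by (intro mult_left_mono) auto
      then show ?thesis by (simp add: abs_mult_self_eq)
    qed (use zero_le_square[of "g x"] in linarith)
    then have "\<bar>g x\<bar> * p x \<le> (g x * g x + 1) * p x" using p_nonneg[of x] by (rule mult_right_mono)
    then show ?thesis using p_nonneg[of x] by (simp add: abs_mult distrib_right)
  qed
qed

lemma admissible_dominated:
  fixes p q g :: "'a::euclidean_space \<Rightarrow> real"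
  assumes adm: "admissible p g" and q_meas: "q \<in> borel_measurable lebesgue"
    and p_meas: "p \<in> borel_measurable lebesgue" and p_pos: "\<And>x. 0 < p x"
    and q_nonneg: "\<And>x. 0 \<le> q x" and q_le: "\<And>x. q x \<le> c * p x"
  shows "admissible q g"
proof -
  define G where "G x = ((g x)\<^sup>2 + (norm (grad g x))\<^sup>2) * p x" for x
  have G_int: "integrable lebesgue G" and lip: "locally_lipschitz g"
    using adm unfolding admissible_def G_def by auto
  have G_nonneg: "0 \<le> G x" for x unfolding G_def using p_pos[of x] by simp
  have "integrable lebesgue (\<lambda>x. G x * (q x / p x))"
  proof (rule integrable_abs_bound)
    show "integrable lebesgue (\<lambda>x. c * G x)" using G_int by simp
    have "G \<in> borel_measurable lebesgue" using G_int by (rule borel_measurable_integrable)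
    then show "(\<lambda>x. G x * (q x / p x)) \<in> borel_measurable lebesgue"
      using q_meas p_meas by (intro borel_measurable_times borel_measurable_divide)
    show "\<bar>G x * (q x / p x)\<bar> \<le> c * G x" for x
    proof -
      have "q x / p x \<le> c" using q_le[of x] p_pos[of x] by (simp add: divide_le_eq)
      then have "G x * (q x / p x) \<le> G x * c" using G_nonneg[of x] by (rule mult_left_mono)
      moreover have "0 \<le> G x * (q x / p x)" using G_nonneg[of x] q_nonneg[of x] p_pos[of x] by simp
      ultimately show ?thesis by (simp add: mult.commute)
    qed
  qed
  moreover have "G x * (q x / p x) = ((g x)\<^sup>2 + (norm (grad g x))\<^sup>2) * q x" for x
    unfolding G_def using p_pos[of x] by (simp add: field_simps)
  ultimately show ?thesis unfolding admissible_def using lip by simp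
qed

lemma integral_mult_weighted_sum:
  fixes h :: "'b \<Rightarrow> real" and P :: "nat \<Rightarrow> 'b \<Rightarrow> real"
  assumes "\<And>i. i < n \<Longrightarrow> integrable M (\<lambda>x. h x * P i x)"
  shows "(\<integral>x. h x * (\<Sum>i<n. w i * P i x) \<partial>M) = (\<Sum>i<n. w i * (\<integral>x. h x * P i x \<partial>M))"
proof -
  have "(\<integral>x. h x * (\<Sum>i<n. w i * P i x) \<partial>M) = (\<integral>x. (\<Sum>i<n. w i * (h x * P i x)) \<partial>M)"
    by (simp add: sum_distrib_left mult_ac)
  also have "\<dots> = (\<Sum>i<n. w i * (\<integral>x. h x * P i x \<partial>M))"
    using assms by (subst Bochner_Integration.integral_sum) auto
  finally show ?thesis .
qed

lemma poincare_mixture_mean_zero: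
  fixes P :: "nat \<Rightarrow> 'a::euclidean_space \<Rightarrow> real" and w :: "nat \<Rightarrow> real" and n :: nat
    and g :: "'a \<Rightarrow> real"
  defines "p \<equiv> \<lambda>x. \<Sum>i<n. w i * P i x"
  assumes P_meas: "\<And>i. i < n \<Longrightarrow> P i \<in> borel_measurable lebesgue"
    and P_nonneg: "\<And>i x. i < n \<Longrightarrow> 0 \<le> P i x"
    and PI: "\<And>i. i < n \<Longrightarrow> poincare (P i) C"
    and w_pos: "\<And>i. i < n \<Longrightarrow> 0 < w i"
    and p_pos: "\<And>x. 0 < p x"
    and adm: "admissible p g"
    and mean0: "\<And>i. i < n \<Longrightarrow> (\<integral>x. g x * P i x \<partial>lebesgue) = 0"
  shows "(1 / C) * normsq_p p g \<le> dirichlet p g"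
proof -
  have p_meas: "p \<in> borel_measurable lebesgue" unfolding p_def using P_meas by simp
  have adm_i: "admissible (P i) g" if i: "i < n" for i
  proof (rule admissible_dominated[OF adm P_meas[OF i] p_meas p_pos P_nonneg[OF i]])
    show "P i x \<le> (1 / w i) * p x" for x
      using member_le_sum[of i "{..<n}" "\<lambda>i. w i * P i x"] w_pos P_nonneg i
      by (simp add: p_def field_simps less_imp_le)
  qed
  note int_i = admissible_integrable[OF adm_i P_meas P_nonneg]
  have PI_i: "(1 / C) * normsq_p (P i) g \<le> dirichlet (P i) g" if i: "i < n" for i
  proof -
    have "var_p (P i) g = normsq_p (P i) g" unfolding var_p_def using mean0[OF i] by simp
    then show ?thesis using PI[OF i] adm_i[OF i] unfolding poincare_def by metis
  qed
  have "normsq_p p g = (\<Sum>i<n. w i * normsq_p (P i) g)"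
    unfolding normsq_p_def inner_p_def p_def by (rule integral_mult_weighted_sum) (rule int_i(2))
  then have "(1 / C) * normsq_p p g = (\<Sum>i<n. w i * ((1 / C) * normsq_p (P i) g))"
    by (simp add: sum_distrib_left mult_ac)
  also have "\<dots> \<le> (\<Sum>i<n. w i * dirichlet (P i) g)"
    using PI_i w_pos by (intro sum_mono mult_left_mono) (auto simp: less_imp_le)
  also have "\<dots> = dirichlet p g"
    unfolding dirichlet_def p_def by (rule integral_mult_weighted_sum[symmetric]) (rule int_i(3))
  finally show ?thesis .
qed

lemma eigval_Suc_ge:
  fixes p :: "'a::euclidean_space \<Rightarrow> real"
  assumes indep: "l2_indep p m s" and p_nonneg: "\<And>x. 0 \<le> p x"
    and bound: "\<And>g. admissible p g \<Longrightarrow> normsq_p p g \<noteq> 0 \<Longrightarrow> \<forall>j<m. inner_p p g (s j) = 0 \<Longrightarrow>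
      c * normsq_p p g \<le> dirichlet p g"
  shows "ereal c \<le> eigval (m + 1) p"
proof -
  have "ereal c \<le> ereal (dirichlet p g / normsq_p p g)"
    if "admissible p g" "normsq_p p g \<noteq> 0" "\<forall>j<m. inner_p p g (s j) = 0" for g
  proof -
    have "0 \<le> normsq_p p g" unfolding normsq_p_def inner_p_def
      using p_nonneg by (intro Bochner_Integration.integral_nonneg) simp
    then show ?thesis using bound[OF that] that(2) by (simp add: pos_le_divide_eq)
  qed
  then have "ereal c \<le> (INF g \<in> {g. admissible p g \<and> normsq_p p g \<noteq> 0
      \<and> (\<forall>j<m. inner_p p g (s j) = 0)}. ereal (dirichlet p g / normsq_p p g))"
    by (intro INF_greatest) blast
  also have "\<dots> \<le> eigval (m + 1) p"
    unfolding eigval_def using indep by (intro SUP_upper2[of s]) simp_all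
  finally show ?thesis .
qed

lemma mixture_mean_zero_test_functions:
  fixes P :: "nat \<Rightarrow> 'a::euclidean_space \<Rightarrow> real" and w :: "nat \<Rightarrow> real" and n :: nat
  defines "p \<equiv> \<lambda>x. \<Sum>i<n. w i * P i x"
  assumes P_cont: "\<And>i. i < n \<Longrightarrow> continuous_on UNIV (P i)"
    and P_nonneg: "\<And>i x. i < n \<Longrightarrow> 0 \<le> P i x"
    and w_pos: "\<And>i. i < n \<Longrightarrow> 0 < w i"
    and p_pos: "\<And>x. 0 < p x" and p_int: "integrable lebesgue p"
  obtains s where "l2_indep p n s"
    and "\<And>g i. admissible p g \<Longrightarrow> \<forall>j<n. inner_p p g (s j) = 0 \<Longrightarrow> i < n \<Longrightarrow>
      (\<integral>x. g x * P i x \<partial>lebesgue) = 0"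
proof -
  have p_cont: "continuous_on UNIV p" unfolding p_def using P_cont by (intro continuous_intros) auto
  have p_meas: "p \<in> borel_measurable lebesgue" using p_int by (rule borel_measurable_integrable)
  have ratio: "(\<lambda>x. w i * P i x / p x) \<in> bcontfun" if i: "i < n" for i
  proof (rule ratio_in_bcontfun)
    show "w i * P i x \<le> p x" for x
      unfolding p_def using w_pos P_nonneg i by (intro member_le_sum) (auto simp: less_imp_le)
  qed (use P_cont[OF i] p_cont p_pos w_pos[OF i] P_nonneg[OF i] in \<open>auto intro: continuous_intros\<close>)
  define q where "q i = Bcontfun (\<lambda>x. w i * P i x / p x)" for i
  have q: "apply_bcontfun (q i) x = w i * P i x / p x" if "i < n" for i x
    using ratio[OF that] unfolding q_def by (simp add: Bcontfun_inverse)
  obtain s where s_indep: "l2_indep p n s"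
    and s_orth: "\<And>g i. integrable lebesgue (\<lambda>x. g x * p x) \<Longrightarrow> g \<in> borel_measurable lebesgue \<Longrightarrow>
      \<forall>j<n. inner_p p g (s j) = 0 \<Longrightarrow> i < n \<Longrightarrow> inner_p p g (apply_bcontfun (q i)) = 0"
    using bcontfun_l2_indep_spanning[OF p_cont p_pos p_int] by blast
  show ?thesis
  proof (rule that[OF s_indep])
    fix g i assume adm: "admissible p g" and orth: "\<forall>j<n. inner_p p g (s j) = 0" and i: "i < n"
    have "inner_p p g (apply_bcontfun (q i)) = (\<integral>x. w i * (g x * P i x) \<partial>lebesgue)"
      unfolding inner_p_def q[OF i] using p_pos
      by (intro Bochner_Integration.integral_cong) (auto simp: less_imp_neq[symmetric])
    moreover have "inner_p p g (apply_bcontfun (q i)) = 0"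
      using adm p_int p_pos admissible_integrable(1)[OF adm p_meas] orth i
      by (intro s_orth admissible_integrable_mult) (auto simp: less_imp_le)
    ultimately show "(\<integral>x. g x * P i x \<partial>lebesgue) = 0" using w_pos[OF i] by simp
  qed
qed

theorem mainTheorem3:
  fixes f :: "nat \<Rightarrow> 'a::euclidean_space \<Rightarrow> real"
    and w :: "nat \<Rightarrow> real" and n :: nat and C :: real
  assumes smooth: "\<And>i. i < n \<Longrightarrow> smooth_fun (f i)"
    and dens: "\<And>i. i < n \<Longrightarrow> prob_density (\<lambda>x. exp (- f i x))"
    and wpos: "\<And>i. i < n \<Longrightarrow> w i > 0"
    and wsum: "(\<Sum>i<n. w i) = 1"
    and Cpos: "C > 0"
    and PI: "\<And>i. i < n \<Longrightarrow> poincare (\<lambda>x. exp (- f i x)) C"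
  shows "eigval (n + 1) (\<lambda>x. \<Sum>i<n. w i * exp (- f i x)) \<ge> ereal (1 / C)"
proof -
  define P where "P i x = exp (- f i x)" for i x
  define p where "p = (\<lambda>x. \<Sum>i<n. w i * P i x)"
  have P_cont: "continuous_on UNIV (P i)" if "i < n" for i
    unfolding P_def using smooth_fun_imp_continuous[OF smooth[OF that]] by (intro continuous_intros)
  have p_pos: "0 < p x" for x
    unfolding p_def using wpos wsum by (intro sum_pos) (auto simp: P_def)
  have p_int: "integrable lebesgue p"
    unfolding p_def using dens
    by (intro Bochner_Integration.integrable_sum) (auto simp: P_def prob_density_def)
  obtain s where s_indep: "l2_indep p n s" and mean0: "\<And>g i. admissible p g \<Longrightarrow>
      \<forall>j<n. inner_p p g (s j) = 0 \<Longrightarrow> i < n \<Longrightarrow> (\<integral>x. g x * P i x \<partial>lebesgue) = 0"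
    using mixture_mean_zero_test_functions[of n P w] P_cont wpos p_pos p_int
    unfolding p_def by (auto simp: P_def less_imp_le)
  have "ereal (1 / C) \<le> eigval (n + 1) p"
  proof (rule eigval_Suc_ge[OF s_indep])
    show "0 \<le> p x" for x using p_pos[of x] by simp
    show "1 / C * normsq_p p g \<le> dirichlet p g"
      if "admissible p g" "\<forall>j<n. inner_p p g (s j) = 0" for g
      using that p_pos mean0[OF that] PI dens wpos unfolding p_def P_def[abs_def]
      by (intro poincare_mixture_mean_zero) (auto simp: prob_density_def)
  qed
  then show ?thesis unfolding p_def P_def .
qed

end
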